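(* If the multiply twisted product Finsler manifold $M_0\times_{f_1}M_1\times\cdots\times_{f_{\mathbf b}}M_{\mathbf b}$ is $C$-reducible, then it is a Riemannian manifold.
   Context: Let $(M_i,F_i)$, $0\le i\le\mathbf b$, be Finsler manifolds and $f_i:M_0\times M_i\to(0,\infty)$ smooth. The multiply twisted product Finsler manifold is $M=M_0\times\cdots\times M_{\mathbf b}$ with $F(v_0,\dots,v_{\mathbf b})=\sqrt{F_0^2(v_0)+\sum_{i=1}^{\mathbf b}f_i^2(\pi_0(v_0),\pi_i(v_i))F_i^2(v_i)}$ on $TM_0^0\times\cdots\times TM_{\mathbf b}^0$ ($TM_i^0=TM_i\setminus\{0\}$, $\pi_i:TM_i\to M_i$). For a Finsler manifold $(M,F)$ of dimension $n$ with local coordinates $(x^i,y^i)$: $g_{ij}=\frac12\frac{\partial^2F^2}{\partial y^i\partial y^j}$, $(g^{ij})$ its inverse, $C_{ijk}=\frac12\frac{\partial g_{ij}}{\partial y^k}$, $I_i=g^{jk}C_{ijk}$, $h_{ij}=g_{ij}-\frac1{F^2}g_{ip}y^pg_{jq}y^q$, and $M_{ijk}=C_{ijk}-\frac1{n+1}(I_ih_{jk}+I_jh_{ik}+I_kh_{ij})$. $F$ is $C$-reducible if $M_{ijk}=0$, and Riemannian if $C_{ijk}=0$ (i.e. $F^2$ is quadratic in $y$). *)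

theory Defs
  imports "HOL-Analysis.Analysis"
begin

text \<open>The product manifold is modelled in a product chart:
  the total coordinate space is real^'n; each coordinate k belongs to the factor blk k.
  Points of the tangent bundle are pairs (x,y) of position and fibre coordinates.\<close>

text \<open>Coordinate directions on the tangent bundle: Inl k = x^k, Inr k = y^k.\<close>
definition fin_shift :: "('n::finite + 'n) \<Rightarrow> real \<Rightarrow> ((real^'n) \<times> (real^'n)) \<Rightarrow> ((real^'n) \<times> (real^'n))" where
  "fin_shift d t p = (case d of Inl k \<Rightarrow> (fst p + t *\<^sub>R axis k 1, snd p)
                              | Inr k \<Rightarrow> (fst p, snd p + t *\<^sub>R axis k 1))"

definition fin_pd :: "('n::finite + 'n) \<Rightarrow> ((real^'n) \<times> (real^'n) \<Rightarrow> real) \<Rightarrow> (real^'n) \<times> (real^'n) \<Rightarrow> real" where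
  "fin_pd d \<phi> p = deriv (\<lambda>t. \<phi> (fin_shift d t p)) 0"

fun fin_ipd :: "('n::finite + 'n) list \<Rightarrow> ((real^'n) \<times> (real^'n) \<Rightarrow> real) \<Rightarrow> (real^'n) \<times> (real^'n) \<Rightarrow> real" where
  "fin_ipd [] \<phi> = \<phi>"
| "fin_ipd (d # ds) \<phi> = fin_pd d (fin_ipd ds \<phi>)"

definition fin_smooth_on :: "((real^'n::finite) \<times> (real^'n)) set \<Rightarrow> ((real^'n) \<times> (real^'n) \<Rightarrow> real) \<Rightarrow> bool" where
  "fin_smooth_on S \<phi> \<longleftrightarrow> open S \<and>
     (\<forall>ds. continuous_on S (fin_ipd ds \<phi>) \<and>
        (\<forall>d p. p \<in> S \<longrightarrow> ((\<lambda>t. fin_ipd ds \<phi> (fin_shift d t p)) has_real_derivative fin_ipd (d # ds) \<phi> p) (at 0)))"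

text \<open>Finsler quantities of a function L(x,y) (here used for the total space, dimension CARD('n)).\<close>
definition fin_g :: "(real^'n::finite \<Rightarrow> real^'n \<Rightarrow> real) \<Rightarrow> real^'n \<Rightarrow> real^'n \<Rightarrow> 'n \<Rightarrow> 'n \<Rightarrow> real" where
  "fin_g L x y i j = 1/2 * fin_ipd [Inr i, Inr j] (\<lambda>p. (L (fst p) (snd p))^2) (x, y)"

definition fin_C :: "(real^'n::finite \<Rightarrow> real^'n \<Rightarrow> real) \<Rightarrow> real^'n \<Rightarrow> real^'n \<Rightarrow> 'n \<Rightarrow> 'n \<Rightarrow> 'n \<Rightarrow> real" where
  "fin_C L x y i j k = 1/2 * fin_pd (Inr k) (\<lambda>p. fin_g L (fst p) (snd p) i j) (x, y)"

definition fin_gmat :: "(real^'n::finite \<Rightarrow> real^'n \<Rightarrow> real) \<Rightarrow> real^'n \<Rightarrow> real^'n \<Rightarrow> real^'n^'n" where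
  "fin_gmat L x y = (\<chi> i j. fin_g L x y i j)"

definition fin_I :: "(real^'n::finite \<Rightarrow> real^'n \<Rightarrow> real) \<Rightarrow> real^'n \<Rightarrow> real^'n \<Rightarrow> 'n \<Rightarrow> real" where
  "fin_I L x y i = (\<Sum>j\<in>UNIV. \<Sum>k\<in>UNIV. matrix_inv (fin_gmat L x y) $ j $ k * fin_C L x y i j k)"

definition fin_h :: "(real^'n::finite \<Rightarrow> real^'n \<Rightarrow> real) \<Rightarrow> real^'n \<Rightarrow> real^'n \<Rightarrow> 'n \<Rightarrow> 'n \<Rightarrow> real" where
  "fin_h L x y i j = fin_g L x y i j
     - 1 / (L x y)^2 * (\<Sum>p\<in>UNIV. fin_g L x y i p * y $ p) * (\<Sum>q\<in>UNIV. fin_g L x y j q * y $ q)"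

definition fin_M :: "(real^'n::finite \<Rightarrow> real^'n \<Rightarrow> real) \<Rightarrow> real^'n \<Rightarrow> real^'n \<Rightarrow> 'n \<Rightarrow> 'n \<Rightarrow> 'n \<Rightarrow> real" where
  "fin_M L x y i j k = fin_C L x y i j k
     - 1 / (real CARD('n) + 1) * (fin_I L x y i * fin_h L x y j k + fin_I L x y j * fin_h L x y i k
                                   + fin_I L x y k * fin_h L x y i j)"

definition C_reducible_on :: "((real^'n::finite) \<times> (real^'n)) set \<Rightarrow> (real^'n \<Rightarrow> real^'n \<Rightarrow> real) \<Rightarrow> bool" where
  "C_reducible_on D L \<longleftrightarrow> (\<forall>(x, y)\<in>D. \<forall>i j k. fin_M L x y i j k = 0)"

definition riemannian_on :: "((real^'n::finite) \<times> (real^'n)) set \<Rightarrow> (real^'n \<Rightarrow> real^'n \<Rightarrow> real) \<Rightarrow> bool" where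
  "riemannian_on D L \<longleftrightarrow> (\<forall>(x, y)\<in>D. \<forall>i j k. fin_C L x y i j k = 0)"

text \<open>Factor structure: a set B of coordinates (one factor).\<close>
definition depends_only :: "'n::finite set \<Rightarrow> (real^'n \<Rightarrow> real^'n \<Rightarrow> real) \<Rightarrow> bool" where
  "depends_only B L \<longleftrightarrow> (\<forall>x x' y y'. (\<forall>k\<in>B. x $ k = x' $ k \<and> y $ k = y' $ k) \<longrightarrow> L x y = L x' y')"

definition cyl_open :: "'n::finite set \<Rightarrow> (real^'n) set \<Rightarrow> bool" where
  "cyl_open B U \<longleftrightarrow> open U \<and> (\<forall>x x'. (\<forall>k\<in>B. x $ k = x' $ k) \<longrightarrow> (x \<in> U \<longleftrightarrow> x' \<in> U))"

definition nonzero_on :: "'n::finite set \<Rightarrow> real^'n \<Rightarrow> bool" where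
  "nonzero_on B y \<longleftrightarrow> (\<exists>k\<in>B. y $ k \<noteq> 0)"

definition finsler_factor :: "'n::finite set \<Rightarrow> (real^'n) set \<Rightarrow> (real^'n \<Rightarrow> real^'n \<Rightarrow> real) \<Rightarrow> bool" where
  "finsler_factor B U L \<longleftrightarrow> cyl_open B U \<and> depends_only B L \<and>
     fin_smooth_on {p. fst p \<in> U \<and> nonzero_on B (snd p)} (\<lambda>p. L (fst p) (snd p)) \<and>
     (\<forall>x y. x \<in> U \<and> nonzero_on B y \<longrightarrow>
        L x y > 0 \<and> (\<forall>c>0. L x (c *\<^sub>R y) = c * L x y) \<and>
        (\<forall>v. nonzero_on B v \<longrightarrow> (\<Sum>j\<in>B. \<Sum>k\<in>B. fin_g L x y j k * v $ j * v $ k) > 0))"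

definition twist_function :: "'n::finite set \<Rightarrow> 'n set \<Rightarrow> (real^'n) set \<Rightarrow> (real^'n) set \<Rightarrow> (real^'n \<Rightarrow> real) \<Rightarrow> bool" where
  "twist_function B0 Bi U0 Ui f \<longleftrightarrow>
     depends_only (B0 \<union> Bi) (\<lambda>x y. f x) \<and>
     fin_smooth_on {p. fst p \<in> U0 \<inter> Ui} (\<lambda>p. f (fst p)) \<and>
     (\<forall>x \<in> U0 \<inter> Ui. f x > 0)"

definition twisted_F :: "nat \<Rightarrow> (nat \<Rightarrow> real^'n::finite \<Rightarrow> real^'n \<Rightarrow> real) \<Rightarrow> (nat \<Rightarrow> real^'n \<Rightarrow> real) \<Rightarrow> real^'n \<Rightarrow> real^'n \<Rightarrow> real" where
  "twisted_F b Fs f x y = sqrt ((Fs 0 x y)^2 + (\<Sum>i\<in>{1..b}. (f i x)^2 * (Fs i x y)^2))"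

definition product_domain :: "('n::finite \<Rightarrow> nat) \<Rightarrow> nat \<Rightarrow> (nat \<Rightarrow> (real^'n) set) \<Rightarrow> ((real^'n) \<times> (real^'n)) set" where
  "product_domain blk b U = {(x, y). \<forall>i\<le>b. x \<in> U i \<and> nonzero_on {k. blk k = i} y}"

end

theory Submission
  imports Defs
begin

text \<open>
  Since \<open>F\<^sup>2 = F\<^sub>0\<^sup>2 + \<Sum>\<^sub>i f\<^sub>i\<^sup>2 F\<^sub>i\<^sup>2\<close> and the \<open>i\<close>-th summand depends on the fibre coordinates of
  the \<open>i\<close>-th factor only, the fundamental tensor \<open>g\<close> is block diagonal and the Cartan tensor
  \<open>C\<^sub>a\<^sub>b\<^sub>c\<close> vanishes unless \<open>a, b, c\<close> lie in one block. Euler's theorem for the homogeneous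
  factors gives \<open>y\<^sup>a C\<^sub>a\<^sub>b\<^sub>c = 0\<close> summed over any single block, hence \<open>\<Sum> y\<^sup>a I\<^sub>a = 0\<close> over every
  block. Now let \<open>a\<close> lie in block \<open>i\<close> and pick a different block \<open>j\<close> (there are at least
  two). For \<open>b, c\<close> in block \<open>j\<close> we have \<open>C\<^sub>a\<^sub>b\<^sub>c = 0\<close>, so \<open>M\<^sub>a\<^sub>b\<^sub>c = 0\<close> reads
  \<open>I\<^sub>a h\<^sub>b\<^sub>c + I\<^sub>b h\<^sub>a\<^sub>c + I\<^sub>c h\<^sub>a\<^sub>b = 0\<close>; contracting with \<open>y\<^sup>b y\<^sup>c\<close> over block \<open>j\<close> kills the
  last two terms and leaves \<open>I\<^sub>a q (1 - q / F\<^sup>2) = 0\<close> with \<open>q = f\<^sub>j\<^sup>2 F\<^sub>j\<^sup>2\<close>. As \<open>0 < q < F\<^sup>2\<close>,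
  \<open>I = 0\<close>, and then \<open>C = M = 0\<close>.
\<close>

definition has_partial_deriv ::
    "('n::finite + 'n) \<Rightarrow> ((real^'n) \<times> (real^'n) \<Rightarrow> real) \<Rightarrow> (real^'n) \<times> (real^'n) \<Rightarrow> real \<Rightarrow> bool" where
  "has_partial_deriv d u p D \<longleftrightarrow> ((\<lambda>t. u (fin_shift d t p)) has_real_derivative D) (at 0)"

lemma fin_shift_zero [simp]: "fin_shift d 0 p = p"
  by (cases d) (auto simp: fin_shift_def)

lemma fin_shift_Inr [simp]: "fin_shift (Inr k) t p = (fst p, snd p + t *\<^sub>R axis k 1)"
  by (simp add: fin_shift_def)

lemma fin_shift_commute: "fin_shift d t (fin_shift e s p) = fin_shift e s (fin_shift d t p)"
  by (cases d; cases e) (auto simp: fin_shift_def algebra_simps)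

lemma continuous_fin_shift: "continuous (at t) (\<lambda>t. fin_shift d t p)"
  by (cases d) (auto simp: fin_shift_def intro!: continuous_intros)

lemma fin_pd_eqI: "has_partial_deriv d u p D \<Longrightarrow> fin_pd d u p = D"
  unfolding has_partial_deriv_def fin_pd_def by (rule DERIV_imp_deriv)

lemma has_partial_deriv_unique: "has_partial_deriv d u p D \<Longrightarrow> has_partial_deriv d u p D' \<Longrightarrow> D = D'"
  unfolding has_partial_deriv_def by (rule DERIV_unique)

lemma has_partial_deriv_eq_rhs: "has_partial_deriv d u p D \<Longrightarrow> D = D' \<Longrightarrow> has_partial_deriv d u p D'"
  by simp

lemma has_partial_deriv_add:
  "has_partial_deriv d u p Du \<Longrightarrow> has_partial_deriv d v p Dv \<Longrightarrow>
    has_partial_deriv d (\<lambda>q. u q + v q) p (Du + Dv)"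
  unfolding has_partial_deriv_def by (rule DERIV_add)

lemma has_partial_deriv_mult:
  "has_partial_deriv d u p Du \<Longrightarrow> has_partial_deriv d v p Dv \<Longrightarrow>
    has_partial_deriv d (\<lambda>q. u q * v q) p (Du * v p + u p * Dv)"
  unfolding has_partial_deriv_def by (drule (1) DERIV_mult) (simp add: mult.commute)

lemma has_partial_deriv_const: "has_partial_deriv d (\<lambda>q. c) p 0"
  unfolding has_partial_deriv_def by simp

lemma has_partial_deriv_sum:
  "finite A \<Longrightarrow> (\<And>i. i \<in> A \<Longrightarrow> has_partial_deriv d (u i) p (Du i)) \<Longrightarrow>
    has_partial_deriv d (\<lambda>q. \<Sum>i\<in>A. u i q) p (\<Sum>i\<in>A. Du i)"
  unfolding has_partial_deriv_def by (rule DERIV_sum)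

lemma has_partial_deriv_Inr_fst: "has_partial_deriv (Inr k) (\<lambda>q. w (fst q)) p 0"
  unfolding has_partial_deriv_def by simp

lemma has_partial_deriv_Inr_component:
  "has_partial_deriv (Inr k) (\<lambda>q. snd q $ a) p (of_bool (a = k))"
proof -
  have "((\<lambda>t. snd p $ a + t * of_bool (a = k)) has_real_derivative of_bool (a = k)) (at 0)"
    by (auto intro!: derivative_eq_intros)
  then show ?thesis unfolding has_partial_deriv_def by (simp add: axis_def of_bool_def)
qed

lemma has_partial_deriv_transfer:
  assumes "open S" "p \<in> S" "\<And>q. q \<in> S \<Longrightarrow> u q = v q" "has_partial_deriv d v p D"
  shows "has_partial_deriv d u p D"
proof -
  have "open ((\<lambda>t. fin_shift d t p) -` S)"
    using assms(1) by (rule continuous_open_vimage) (rule continuous_fin_shift)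
  moreover have "0 \<in> (\<lambda>t. fin_shift d t p) -` S" using assms(2) by simp
  ultimately have "eventually (\<lambda>t. fin_shift d t p \<in> S) (nhds 0)"
    using eventually_nhds_in_open by fastforce
  then have "eventually (\<lambda>t. u (fin_shift d t p) = v (fin_shift d t p)) (nhds 0)"
    by eventually_elim (use assms(3) in auto)
  then show ?thesis using assms(4) unfolding has_partial_deriv_def
    by (subst DERIV_cong_ev[where g="\<lambda>t. v (fin_shift d t p)"]) auto
qed

lemma fin_smooth_on_open: "fin_smooth_on S \<Phi> \<Longrightarrow> open S"
  unfolding fin_smooth_on_def by blast

lemma fin_smooth_on_continuous: "fin_smooth_on S \<Phi> \<Longrightarrow> continuous_on S (fin_ipd ds \<Phi>)"
  unfolding fin_smooth_on_def by blast

lemma fin_smooth_on_has_partial_deriv: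
  "fin_smooth_on S \<Phi> \<Longrightarrow> p \<in> S \<Longrightarrow> has_partial_deriv d (fin_ipd ds \<Phi>) p (fin_ipd (d # ds) \<Phi> p)"
  unfolding fin_smooth_on_def has_partial_deriv_def by blast

lemma fin_pd_shift_invariant_zero:
  assumes "\<And>q s. \<phi> (fin_shift a s q) = \<phi> q"
  shows "fin_pd a \<phi> p = 0"
  unfolding fin_pd_def using assms by simp

lemma fin_pd_shift_invariant:
  assumes "\<And>q s. \<phi> (fin_shift a s q) = \<phi> q"
  shows "fin_pd d \<phi> (fin_shift a s p) = fin_pd d \<phi> p"
  unfolding fin_pd_def by (simp add: fin_shift_commute[of d _ a] assms)

text \<open>No differentiability of \<open>h\<close> is needed: \<open>deriv\<close> is defined via \<open>THE\<close>.\<close>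

lemma deriv_const_add: "deriv (\<lambda>t. c + h t) x = deriv h x"
proof -
  have "DERIV (\<lambda>t. c + h t) x :> D \<longleftrightarrow> DERIV h x :> D" for D
    using DERIV_add[OF _ DERIV_const[of "-c"], of "\<lambda>t. c + h t"] DERIV_add[OF DERIV_const[of c]]
    by force
  then show ?thesis unfolding deriv_def by simp
qed

section \<open>Directional derivatives from continuous partial derivatives\<close>

lemma axis_increment_bound:
  fixes \<phi> :: "real^'n::finite \<Rightarrow> real"
  assumes der: "\<And>z. z \<in> T \<Longrightarrow> ((\<lambda>s. \<phi> (z + s *\<^sub>R axis k 1)) has_real_derivative P z) (at 0)"
    and near: "\<And>\<sigma>. \<bar>\<sigma>\<bar> \<le> \<rho> \<Longrightarrow> z + \<sigma> *\<^sub>R axis k 1 \<in> T \<and> \<bar>P (z + \<sigma> *\<^sub>R axis k 1) - Q\<bar> \<le> B"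
    and "\<bar>\<tau>\<bar> \<le> \<rho>"
  shows "\<bar>\<phi> (z + \<tau> *\<^sub>R axis k 1) - \<phi> z - \<tau> * Q\<bar> \<le> B * \<bar>\<tau>\<bar>"
proof -
  define h where "h \<sigma> = \<phi> (z + \<sigma> *\<^sub>R axis k 1) - \<sigma> * Q" for \<sigma>
  have "(h has_field_derivative (P (z + \<sigma> *\<^sub>R axis k 1) - Q)) (at \<sigma> within {-\<rho>..\<rho>})"
    if "\<sigma> \<in> {-\<rho>..\<rho>}" for \<sigma>
  proof -
    have "z + \<sigma> *\<^sub>R axis k 1 \<in> T" using near that by auto
    from der[OF this] have "((\<lambda>s. \<phi> (z + (s + \<sigma>) *\<^sub>R axis k 1)) has_real_derivative P (z + \<sigma> *\<^sub>R axis k 1)) (at 0)"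
      by (simp add: algebra_simps scaleR_add_left)
    then have "((\<lambda>s. \<phi> (z + s *\<^sub>R axis k 1)) has_real_derivative P (z + \<sigma> *\<^sub>R axis k 1)) (at \<sigma>)"
      using DERIV_shift[of _ _ 0 \<sigma>] by simp
    then have "(h has_field_derivative (P (z + \<sigma> *\<^sub>R axis k 1) - Q)) (at \<sigma>)"
      unfolding h_def by (auto intro!: derivative_eq_intros)
    then show ?thesis by (rule has_field_derivative_at_within)
  qed
  moreover have "norm (P (z + \<sigma> *\<^sub>R axis k 1) - Q) \<le> B" if "\<sigma> \<in> {-\<rho>..\<rho>}" for \<sigma>
    using near that by auto
  ultimately have "norm (h \<tau> - h 0) \<le> B * norm (\<tau> - 0)"
    by (intro field_differentiable_bound[OF convex_real_interval(5)]) (use assms(3) in auto)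
  then show ?thesis by (simp add: h_def)
qed

text \<open>The error of the mean value estimate along \<open>e\<^sub>k\<close> is controlled by the continuity of \<open>P\<close> at \<open>y\<close>,
  uniformly for the nearby base points \<open>y + t w\<close>.\<close>

lemma has_real_derivative_axis_increment:
  fixes \<phi> :: "real^'n::finite \<Rightarrow> real"
  assumes T: "open T" "y \<in> T"
    and der: "\<And>z. z \<in> T \<Longrightarrow> ((\<lambda>s. \<phi> (z + s *\<^sub>R axis k 1)) has_real_derivative P z) (at 0)"
    and cont: "continuous_on T P"
  shows "((\<lambda>t. \<phi> (y + t *\<^sub>R w + (t * c) *\<^sub>R axis k 1) - \<phi> (y + t *\<^sub>R w)) has_real_derivative c * P y) (at 0)"
proof -
  define R where "R t = \<phi> (y + t *\<^sub>R w + (t * c) *\<^sub>R axis k 1) - \<phi> (y + t *\<^sub>R w)" for t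
  have "((\<lambda>t. (R t - R 0) / (t - 0)) \<longlongrightarrow> c * P y) (at 0)"
  proof (rule LIM_I)
    fix r :: real assume "r > 0"
    define B where "B = (r / 2) / (\<bar>c\<bar> + 1)"
    have "B > 0" using \<open>r > 0\<close> by (simp add: B_def)
    have "isCont P y" using T cont continuous_on_eq_continuous_at by blast
    then obtain d1 where d1: "d1 > 0" "\<And>z. dist z y < d1 \<Longrightarrow> dist (P z) (P y) < B"
      using \<open>B > 0\<close> unfolding continuous_at_eps_delta by blast
    obtain d2 where d2: "d2 > 0" "ball y d2 \<subseteq> T" using T openE by blast
    define d where "d = min d1 d2"
    have near: "z \<in> T \<and> \<bar>P z - P y\<bar> \<le> B" if "dist z y < d" for z
      using d1 d2 that by (auto simp: d_def dist_real_def dist_commute less_imp_le)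
    have pos: "norm w + \<bar>c\<bar> + 1 > 0" by (smt (verit) norm_ge_zero)
    define s where "s = d / (norm w + \<bar>c\<bar> + 1)"
    have "s > 0" using d1 d2 pos by (simp add: s_def d_def)
    show "\<exists>s>0. \<forall>t. t \<noteq> 0 \<and> norm (t - 0) < s \<longrightarrow> norm ((R t - R 0) / (t - 0) - c * P y) < r"
    proof (intro exI[of _ s] conjI allI impI)
      fix t :: real assume t: "t \<noteq> 0 \<and> norm (t - 0) < s"
      have "dist (y + t *\<^sub>R w + \<sigma> *\<^sub>R axis k 1) y < d" if "\<bar>\<sigma>\<bar> \<le> \<bar>t * c\<bar>" for \<sigma>
      proof -
        have "dist (y + t *\<^sub>R w + \<sigma> *\<^sub>R axis k 1) y \<le> \<bar>t\<bar> * norm w + \<bar>\<sigma>\<bar>"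
          by (simp add: dist_norm norm_triangle_le abs_mult)
        also have "\<dots> \<le> \<bar>t\<bar> * (norm w + \<bar>c\<bar> + 1)"
          using that by (simp add: abs_mult algebra_simps)
        also have "\<dots> < s * (norm w + \<bar>c\<bar> + 1)"
          using t pos by (intro mult_strict_right_mono) auto
        finally show ?thesis using pos by (simp add: s_def)
      qed
      then have "\<bar>R t - t * c * P y\<bar> \<le> B * \<bar>t * c\<bar>"
        unfolding R_def using near
          axis_increment_bound[OF der, where \<rho>="\<bar>t * c\<bar>" and z="y + t *\<^sub>R w" and Q="P y" and B=B and \<tau>="t * c"]
        by auto
      then have "\<bar>R t / t - c * P y\<bar> \<le> B * \<bar>c\<bar>"
        using t by (simp add: divide_simps abs_mult mult_ac)
      also have "\<dots> < r"
      proof -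
        have "B * \<bar>c\<bar> \<le> B * (\<bar>c\<bar> + 1)" using \<open>B > 0\<close> by simp
        also have "\<dots> = r / 2" unfolding B_def by (smt (verit) nonzero_mult_div_cancel_right abs_ge_zero times_divide_eq_left)
        finally show ?thesis using \<open>r > 0\<close> by simp
      qed
      finally show "norm ((R t - R 0) / (t - 0) - c * P y) < r" by (simp add: R_def)
    qed (fact \<open>s > 0\<close>)
  qed
  then show ?thesis by (simp add: has_field_derivative_iff R_def)
qed

lemma has_real_derivative_ray_add_axis:
  fixes \<phi> :: "real^'n::finite \<Rightarrow> real"
  assumes T: "open T" "y \<in> T"
    and der: "\<And>z. z \<in> T \<Longrightarrow> ((\<lambda>s. \<phi> (z + s *\<^sub>R axis k 1)) has_real_derivative P z) (at 0)"
    and cont: "continuous_on T P"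
    and ray: "((\<lambda>t. \<phi> (y + t *\<^sub>R w)) has_real_derivative D) (at 0)"
  shows "((\<lambda>t. \<phi> (y + t *\<^sub>R (w + c *\<^sub>R axis k 1))) has_real_derivative D + c * P y) (at 0)"
  using DERIV_add[OF has_real_derivative_axis_increment[OF T der cont, of w c] ray]
  by (simp add: algebra_simps scaleR_add_right)

lemma has_real_derivative_ray_partials:
  fixes \<phi> :: "real^'n::finite \<Rightarrow> real"
  assumes T: "open T" "y \<in> T"
    and der: "\<And>k z. z \<in> T \<Longrightarrow> ((\<lambda>s. \<phi> (z + s *\<^sub>R axis k 1)) has_real_derivative P k z) (at 0)"
    and cont: "\<And>k. continuous_on T (P k)"
  shows "((\<lambda>t. \<phi> (y + t *\<^sub>R v)) has_real_derivative (\<Sum>k\<in>UNIV. v $ k * P k y)) (at 0)"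
proof -
  have "((\<lambda>t. \<phi> (y + t *\<^sub>R v)) has_real_derivative (\<Sum>k\<in>K. v $ k * P k y)) (at 0)"
    if "finite K" "\<forall>i. i \<notin> K \<longrightarrow> v $ i = 0" for K v
    using that
  proof (induction K arbitrary: v rule: finite_induct)
    case empty
    then have "v = 0" by (simp add: vec_eq_iff)
    then show ?case by simp
  next
    case (insert k K)
    define w where "w = v - (v $ k) *\<^sub>R axis k 1"
    have "\<forall>i. i \<notin> K \<longrightarrow> w $ i = 0" using insert.prems by (auto simp: w_def axis_def)
    from has_real_derivative_ray_add_axis[where k=k, OF T der cont insert.IH[OF this], of "v $ k"]
    have "((\<lambda>t. \<phi> (y + t *\<^sub>R v)) has_real_derivative (\<Sum>i\<in>K. w $ i * P i y) + v $ k * P k y) (at 0)"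
      by (simp only: w_def diff_add_cancel)
    moreover have "(\<Sum>i\<in>K. w $ i * P i y) = (\<Sum>i\<in>K. v $ i * P i y)"
      using insert.hyps by (intro sum.cong) (auto simp: w_def axis_def)
    ultimately show ?case using insert.hyps by (simp add: add.commute)
  qed
  from this[of UNIV v] show ?thesis by simp
qed

section \<open>Euler's theorem for fibrewise homogeneous functions\<close>

definition fibre_cone :: "((real^'n::finite) \<times> (real^'n)) set \<Rightarrow> bool" where
  "fibre_cone S \<longleftrightarrow> (\<forall>x y c. (x, y) \<in> S \<longrightarrow> c > 0 \<longrightarrow> (x, c *\<^sub>R y) \<in> S)"

definition fibre_homogeneous ::
    "((real^'n::finite) \<times> (real^'n)) set \<Rightarrow> ((real^'n) \<times> (real^'n) \<Rightarrow> real) \<Rightarrow> real \<Rightarrow> bool" where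
  "fibre_homogeneous S \<psi> r \<longleftrightarrow>
     (\<forall>x y c. (x, y) \<in> S \<longrightarrow> c > 0 \<longrightarrow> \<psi> (x, c *\<^sub>R y) = c powr r * \<psi> (x, y))"

lemma euler_fibre_homogeneous:
  assumes sm: "fin_smooth_on S \<Phi>" and hom: "fibre_homogeneous S (fin_ipd ds \<Phi>) r" and p: "(x, y) \<in> S"
  shows "(\<Sum>k\<in>UNIV. y $ k * fin_ipd (Inr k # ds) \<Phi> (x, y)) = r * fin_ipd ds \<Phi> (x, y)"
proof -
  define T where "T = Pair x -` S"
  have oT: "open T" unfolding T_def
    by (rule continuous_open_vimage[OF fin_smooth_on_open[OF sm]]) (auto intro!: continuous_intros)
  have yT: "y \<in> T" using p by (simp add: T_def)
  have der: "((\<lambda>s. fin_ipd ds \<Phi> (x, z + s *\<^sub>R axis k 1)) has_real_derivative fin_ipd (Inr k # ds) \<Phi> (x, z)) (at 0)"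
    if "z \<in> T" for k z
    using fin_smooth_on_has_partial_deriv[OF sm, of "(x, z)" "Inr k" ds] that
    by (simp add: T_def has_partial_deriv_def)
  have cont: "continuous_on T (\<lambda>z. fin_ipd (Inr k # ds) \<Phi> (x, z))" for k
    by (rule continuous_on_compose2[OF fin_smooth_on_continuous[OF sm]])
      (auto simp: T_def intro!: continuous_intros)
  have "eventually (\<lambda>t. t \<in> {-1<..}) (nhds (0::real))"
    by (rule eventually_nhds_in_open) auto
  then have "eventually (\<lambda>t. fin_ipd ds \<Phi> (x, y + t *\<^sub>R y) = (1 + t) powr r * fin_ipd ds \<Phi> (x, y)) (nhds 0)"
  proof eventually_elim
    case (elim t)
    have "y + t *\<^sub>R y = (1 + t) *\<^sub>R y" by (simp add: algebra_simps)
    then show ?case using hom p elim unfolding fibre_homogeneous_def by simp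
  qed
  moreover have "((\<lambda>t. (1 + t) powr r * fin_ipd ds \<Phi> (x, y)) has_real_derivative r * fin_ipd ds \<Phi> (x, y)) (at 0)"
    by (rule derivative_eq_intros refl | simp)+
  ultimately have "((\<lambda>t. fin_ipd ds \<Phi> (x, y + t *\<^sub>R y)) has_real_derivative r * fin_ipd ds \<Phi> (x, y)) (at 0)"
    by (simp add: DERIV_cong_ev[OF refl _ refl])
  with has_real_derivative_ray_partials[OF oT yT der cont] show ?thesis
    by (rule DERIV_unique)
qed

lemma fibre_homogeneous_partial:
  assumes sm: "fin_smooth_on S \<Phi>" and cone: "fibre_cone S" and hom: "fibre_homogeneous S (fin_ipd ds \<Phi>) r"
  shows "fibre_homogeneous S (fin_ipd (Inr k # ds) \<Phi>) (r - 1)"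
  unfolding fibre_homogeneous_def
proof (intro allI impI)
  fix x y and c :: real assume p: "(x, y) \<in> S" and c: "c > 0"
  let ?\<psi> = "fin_ipd ds \<Phi>" and ?D = "fin_ipd (Inr k # ds) \<Phi>"
  have pc: "(x, c *\<^sub>R y) \<in> S" using cone p c unfolding fibre_cone_def by blast
  have D1: "((\<lambda>s. ?\<psi> (x, c *\<^sub>R y + s *\<^sub>R axis k 1)) has_real_derivative ?D (x, c *\<^sub>R y)) (at 0)"
    using fin_smooth_on_has_partial_deriv[OF sm pc, of "Inr k" ds] by (simp add: has_partial_deriv_def)
  have D0: "((\<lambda>s. ?\<psi> (x, y + s *\<^sub>R axis k 1)) has_real_derivative ?D (x, y)) (at (0 / c))"
    using fin_smooth_on_has_partial_deriv[OF sm p, of "Inr k" ds] by (simp add: has_partial_deriv_def)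
  have "((\<lambda>s. s / c) has_real_derivative 1 / c) (at 0)"
    using c by (auto intro!: derivative_eq_intros)
  from DERIV_cmult[OF DERIV_chain2[OF D0 this], of "c powr r"]
  have "((\<lambda>s. c powr r * ?\<psi> (x, y + (s / c) *\<^sub>R axis k 1)) has_real_derivative c powr r * (?D (x, y) * (1 / c))) (at 0)"
    by simp
  moreover have "eventually (\<lambda>s. ?\<psi> (x, c *\<^sub>R y + s *\<^sub>R axis k 1) = c powr r * ?\<psi> (x, y + (s / c) *\<^sub>R axis k 1)) (nhds 0)"
  proof -
    have "open ((\<lambda>s. (x, y + (s / c) *\<^sub>R axis k 1)) -` S)"
      by (rule continuous_open_vimage[OF fin_smooth_on_open[OF sm]]) (use c in \<open>auto intro!: continuous_intros\<close>)
    moreover have "0 \<in> (\<lambda>s. (x, y + (s / c) *\<^sub>R axis k 1)) -` S" using p by simp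
    ultimately have "eventually (\<lambda>s. (x, y + (s / c) *\<^sub>R axis k 1) \<in> S) (nhds 0)"
      using eventually_nhds_in_open by fastforce
    then show ?thesis
    proof eventually_elim
      case (elim s)
      have "c *\<^sub>R y + s *\<^sub>R axis k 1 = c *\<^sub>R (y + (s / c) *\<^sub>R axis k 1)"
        using c by (simp add: algebra_simps)
      then show ?case using hom elim c unfolding fibre_homogeneous_def by simp
    qed
  qed
  ultimately have "((\<lambda>s. ?\<psi> (x, c *\<^sub>R y + s *\<^sub>R axis k 1)) has_real_derivative c powr r * (?D (x, y) * (1 / c))) (at 0)"
    by (simp add: DERIV_cong_ev[OF refl _ refl])
  from DERIV_unique[OF D1 this] c show "?D (x, c *\<^sub>R y) = c powr (r - 1) * ?D (x, y)"
    by (simp add: powr_diff)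
qed

lemma contract_trace_part:
  fixes I y :: "'a \<Rightarrow> real" and h :: "'a \<Rightarrow> 'a \<Rightarrow> real"
  assumes yI: "(\<Sum>c\<in>B. y c * I c) = 0"
    and M: "\<And>c e. c \<in> B \<Longrightarrow> e \<in> B \<Longrightarrow> I a * h c e + I c * h a e + I e * h a c = 0"
  shows "I a * (\<Sum>c\<in>B. \<Sum>e\<in>B. y c * y e * h c e) = 0"
proof -
  have z: "(\<Sum>c\<in>B. \<Sum>e\<in>B. (y c * I c) * (y e * h a e)) = 0"
    by (simp add: sum_product[symmetric] yI)
  have "0 = (\<Sum>c\<in>B. \<Sum>e\<in>B. y c * y e * (I a * h c e + I c * h a e + I e * h a c))"
    using M by simp
  also have "\<dots> = (\<Sum>c\<in>B. \<Sum>e\<in>B. I a * (y c * y e * h c e))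
      + (\<Sum>c\<in>B. \<Sum>e\<in>B. (y c * I c) * (y e * h a e)) + (\<Sum>c\<in>B. \<Sum>e\<in>B. (y e * I e) * (y c * h a c))"
    by (simp add: sum.distrib algebra_simps)
  also have "(\<Sum>c\<in>B. \<Sum>e\<in>B. (y e * I e) * (y c * h a c)) = (\<Sum>c\<in>B. \<Sum>e\<in>B. (y c * I c) * (y e * h a e))"
    by (rule sum.swap)
  finally show ?thesis using z by (simp add: sum_distrib_left)
qed

section \<open>The fundamental and Cartan tensors of a multiply twisted product\<close>

locale twisted_product =
  fixes blk :: "'n::finite \<Rightarrow> nat" and b :: nat
    and U :: "nat \<Rightarrow> (real^'n) set"
    and Fs :: "nat \<Rightarrow> real^'n \<Rightarrow> real^'n \<Rightarrow> real"
    and f :: "nat \<Rightarrow> real^'n \<Rightarrow> real"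
  assumes two_factors: "b \<ge> 1"
    and blk_le: "\<forall>k. blk k \<le> b"
    and factors: "\<forall>i\<le>b. finsler_factor {k. blk k = i} (U i) (Fs i)"
    and twists: "\<forall>i\<in>{1..b}. twist_function {k. blk k = 0} {k. blk k = i} (U 0) (U i) (f i)"
begin

abbreviation F :: "real^'n \<Rightarrow> real^'n \<Rightarrow> real" where
  "F \<equiv> twisted_F b Fs f"

definition factor :: "nat \<Rightarrow> (real^'n) \<times> (real^'n) \<Rightarrow> real" where
  "factor j p = Fs j (fst p) (snd p)"

definition tangent_chart :: "nat \<Rightarrow> ((real^'n) \<times> (real^'n)) set" where
  "tangent_chart j = {p. fst p \<in> U j \<and> nonzero_on {k. blk k = j} (snd p)}"

definition weight :: "nat \<Rightarrow> real^'n \<Rightarrow> real" where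
  "weight j x = (if j = 0 then 1 else (f j x)\<^sup>2)"

definition summand :: "nat \<Rightarrow> (real^'n) \<times> (real^'n) \<Rightarrow> real" where
  "summand j p = weight j (fst p) * (factor j p * factor j p)"

definition fundamental_tensor :: "'n \<Rightarrow> 'n \<Rightarrow> (real^'n) \<times> (real^'n) \<Rightarrow> real" where
  "fundamental_tensor a c p = fin_g F (fst p) (snd p) a c"

definition dfactor :: "nat \<Rightarrow> 'n \<Rightarrow> (real^'n) \<times> (real^'n) \<Rightarrow> real" where
  "dfactor j a = fin_ipd [Inr a] (factor j)"

definition ddfactor :: "nat \<Rightarrow> 'n \<Rightarrow> 'n \<Rightarrow> (real^'n) \<times> (real^'n) \<Rightarrow> real" where
  "ddfactor j a c = fin_ipd [Inr a, Inr c] (factor j)"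

lemma blk_bounded: "blk k \<le> b"
  using blk_le by blast

lemma factor_smooth: "j \<le> b \<Longrightarrow> fin_smooth_on (tangent_chart j) (factor j)"
  using factors unfolding finsler_factor_def tangent_chart_def factor_def by blast

lemma open_tangent_chart: "j \<le> b \<Longrightarrow> open (tangent_chart j)"
  using factor_smooth fin_smooth_on_open by blast

lemma fibre_cone_tangent_chart: "fibre_cone (tangent_chart j)"
  unfolding fibre_cone_def tangent_chart_def nonzero_on_def by auto

lemma factor_pos: "j \<le> b \<Longrightarrow> p \<in> tangent_chart j \<Longrightarrow> factor j p > 0"
  using factors unfolding finsler_factor_def tangent_chart_def factor_def by (cases p) auto

lemma factor_homogeneous: "j \<le> b \<Longrightarrow> fibre_homogeneous (tangent_chart j) (fin_ipd [] (factor j)) 1"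
  using factors unfolding finsler_factor_def tangent_chart_def factor_def fibre_homogeneous_def by auto

lemma factor_shift_other_block:
  assumes "j \<le> b" "blk k \<noteq> j"
  shows "factor j (fin_shift (Inr k) s q) = factor j q"
proof -
  have "depends_only {k. blk k = j} (Fs j)"
    using factors assms(1) unfolding finsler_factor_def by blast
  moreover have "\<forall>k'\<in>{k. blk k = j}. fst q $ k' = fst q $ k' \<and> (snd q + s *\<^sub>R axis k 1) $ k' = snd q $ k'"
    using assms(2) by (auto simp: axis_def)
  ultimately show ?thesis unfolding depends_only_def factor_def by (simp only: fin_shift_Inr fst_conv snd_conv)
qed

lemma summand_shift_other_block:
  "j \<le> b \<Longrightarrow> blk k \<noteq> j \<Longrightarrow> summand j (fin_shift (Inr k) s q) = summand j q"
  using factor_shift_other_block by (simp add: summand_def)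

lemma F_squared: "(F x y)\<^sup>2 = (\<Sum>i\<le>b. summand i (x, y))"
proof -
  have "{..b} = insert 0 {1..b}" by auto
  then have "(\<Sum>i\<le>b. summand i (x, y)) = (Fs 0 x y)\<^sup>2 + (\<Sum>i\<in>{1..b}. (f i x)\<^sup>2 * (Fs i x y)\<^sup>2)"
    by (auto simp: summand_def weight_def factor_def power2_eq_square intro!: sum.cong)
  moreover have "0 \<le> (Fs 0 x y)\<^sup>2 + (\<Sum>i\<in>{1..b}. (f i x)\<^sup>2 * (Fs i x y)\<^sup>2)"
    by (intro add_nonneg_nonneg sum_nonneg) auto
  ultimately show ?thesis unfolding twisted_F_def by simp
qed

text \<open>Only the summand of the block of \<open>c\<close> moves along \<open>y\<^sup>c\<close>; no regularity of the others is needed.\<close>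

lemma fin_pd_F_squared:
  "fin_pd (Inr c) (\<lambda>p. (F (fst p) (snd p))\<^sup>2) = fin_pd (Inr c) (summand (blk c))"
proof
  fix p
  have "(\<Sum>i\<le>b. summand i (fin_shift (Inr c) t p))
      = (\<Sum>i\<in>{..b} - {blk c}. summand i p) + summand (blk c) (fin_shift (Inr c) t p)" for t
  proof -
    have "(\<Sum>i\<le>b. summand i (fin_shift (Inr c) t p))
        = summand (blk c) (fin_shift (Inr c) t p) + (\<Sum>i\<in>{..b} - {blk c}. summand i (fin_shift (Inr c) t p))"
      using blk_bounded[of c] by (simp add: sum.remove)
    also have "(\<Sum>i\<in>{..b} - {blk c}. summand i (fin_shift (Inr c) t p)) = (\<Sum>i\<in>{..b} - {blk c}. summand i p)"
      by (intro sum.cong refl summand_shift_other_block) auto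
    finally show ?thesis by simp
  qed
  then show "fin_pd (Inr c) (\<lambda>p. (F (fst p) (snd p))\<^sup>2) p = fin_pd (Inr c) (summand (blk c)) p"
    unfolding fin_pd_def F_squared by (simp del: fin_shift_Inr add: deriv_const_add)
qed

lemma fundamental_tensor_eq_summand: "fundamental_tensor a c = (\<lambda>p. 1/2 * fin_pd (Inr a) (fin_pd (Inr c) (summand (blk c))) p)"
  unfolding fundamental_tensor_def fin_g_def by (simp add: fin_pd_F_squared)

lemma fin_pd_summand_shift_other_block:
  "blk e \<noteq> blk c \<Longrightarrow> fin_pd (Inr c) (summand (blk c)) (fin_shift (Inr e) s q) = fin_pd (Inr c) (summand (blk c)) q"
  by (rule fin_pd_shift_invariant) (simp add: summand_shift_other_block blk_bounded del: fin_shift_Inr)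

lemma fundamental_tensor_off_block: "blk a \<noteq> blk c \<Longrightarrow> fundamental_tensor a c p = 0"
  unfolding fundamental_tensor_eq_summand by (simp add: fin_pd_shift_invariant_zero[OF fin_pd_summand_shift_other_block])

lemma fundamental_tensor_shift_other_block:
  "blk e \<noteq> blk c \<Longrightarrow> fundamental_tensor a c (fin_shift (Inr e) s q) = fundamental_tensor a c q"
  unfolding fundamental_tensor_eq_summand
  by (simp del: fin_shift_Inr add: fin_pd_shift_invariant fin_pd_summand_shift_other_block)

lemma fin_C_eq_fundamental_tensor: "fin_C F x y a c e = 1/2 * fin_pd (Inr e) (fundamental_tensor a c) (x, y)"
  unfolding fin_C_def fundamental_tensor_def by simp

lemma fin_C_off_block: "blk a \<noteq> blk c \<or> blk e \<noteq> blk c \<Longrightarrow> fin_C F x y a c e = 0"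
proof (elim disjE)
  assume "blk a \<noteq> blk c"
  then have "fundamental_tensor a c = (\<lambda>p. 0)" using fundamental_tensor_off_block by auto
  then show ?thesis unfolding fin_C_eq_fundamental_tensor fin_pd_def by simp
next
  assume "blk e \<noteq> blk c"
  then show ?thesis
    unfolding fin_C_eq_fundamental_tensor by (simp add: fin_pd_shift_invariant_zero fundamental_tensor_shift_other_block del: fin_shift_Inr)
qed

lemma has_partial_deriv_factor:
  "j \<le> b \<Longrightarrow> q \<in> tangent_chart j \<Longrightarrow> has_partial_deriv (Inr a) (factor j) q (dfactor j a q)"
  using fin_smooth_on_has_partial_deriv[OF factor_smooth, of j q "Inr a" "[]"] by (simp add: dfactor_def)

lemma has_partial_deriv_dfactor:
  "j \<le> b \<Longrightarrow> q \<in> tangent_chart j \<Longrightarrow> has_partial_deriv (Inr a) (dfactor j c) q (ddfactor j a c q)"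
  using fin_smooth_on_has_partial_deriv[OF factor_smooth, of j q "Inr a" "[Inr c]"]
  by (simp add: dfactor_def ddfactor_def)

lemma ex_has_partial_deriv_ddfactor:
  "j \<le> b \<Longrightarrow> q \<in> tangent_chart j \<Longrightarrow> \<exists>D. has_partial_deriv (Inr d) (ddfactor j a c) q D"
  using fin_smooth_on_has_partial_deriv[OF factor_smooth, of j q "Inr d" "[Inr a, Inr c]"]
  unfolding ddfactor_def by blast

lemma dfactor_other_block: "j \<le> b \<Longrightarrow> blk c \<noteq> j \<Longrightarrow> dfactor j c q = 0"
  unfolding dfactor_def by (simp add: fin_pd_shift_invariant_zero factor_shift_other_block del: fin_shift_Inr)

lemma ddfactor_other_block: "j \<le> b \<Longrightarrow> blk c \<noteq> j \<Longrightarrow> ddfactor j a c q = 0"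
  unfolding ddfactor_def
  by (simp add: fin_pd_shift_invariant_zero factor_shift_other_block fin_pd_def del: fin_shift_Inr)

lemma fin_pd_summand:
  assumes "blk c = j" "q \<in> tangent_chart j"
  shows "fin_pd (Inr c) (summand j) q = weight j (fst q) * (2 * (factor j q * dfactor j c q))"
proof -
  have "j \<le> b" using assms(1) blk_bounded by auto
  then have "has_partial_deriv (Inr c) (summand j) q
      (0 * (factor j q * factor j q) + weight j (fst q) * (dfactor j c q * factor j q + factor j q * dfactor j c q))"
    unfolding summand_def
    by (intro has_partial_deriv_mult has_partial_deriv_Inr_fst has_partial_deriv_factor assms)
  then show ?thesis by (rule fin_pd_eqI[OF has_partial_deriv_eq_rhs]) (simp add: algebra_simps)
qed

lemma fundamental_tensor_in_block:
  assumes "blk c = j" "p \<in> tangent_chart j"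
  shows "fundamental_tensor a c p = weight j (fst p) * (dfactor j a p * dfactor j c p + factor j p * ddfactor j a c p)"
proof -
  have j: "j \<le> b" using assms(1) blk_bounded by auto
  define E where "E q = weight j (fst q) * (2 * (factor j q * dfactor j c q))" for q
  have "has_partial_deriv (Inr a) E p
      (0 * (2 * (factor j p * dfactor j c p)) + weight j (fst p)
        * (0 * (factor j p * dfactor j c p) + 2 * (dfactor j a p * dfactor j c p + factor j p * ddfactor j a c p)))"
    unfolding E_def
    by (intro has_partial_deriv_mult has_partial_deriv_Inr_fst has_partial_deriv_factor
        has_partial_deriv_dfactor has_partial_deriv_const j assms)
  then have "has_partial_deriv (Inr a) (fin_pd (Inr c) (summand j)) p
      (2 * (weight j (fst p) * (dfactor j a p * dfactor j c p + factor j p * ddfactor j a c p)))"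
    by (rule has_partial_deriv_transfer[OF open_tangent_chart[OF j] assms(2), rotated, OF has_partial_deriv_eq_rhs])
      (simp_all add: fin_pd_summand[OF assms(1)] E_def algebra_simps)
  then show ?thesis unfolding fundamental_tensor_eq_summand using assms(1) by (simp add: fin_pd_eqI)
qed

lemma fundamental_tensor_block_formula:
  assumes "blk a = j \<or> blk c = j" "p \<in> tangent_chart j"
  shows "fundamental_tensor a c p = weight j (fst p) * (dfactor j a p * dfactor j c p + factor j p * ddfactor j a c p)"
proof (cases "blk c = j")
  case True
  then show ?thesis using fundamental_tensor_in_block assms(2) by blast
next
  case False
  moreover have "j \<le> b" using assms(1) blk_bounded by auto
  ultimately show ?thesis
    using assms fundamental_tensor_off_block[of a c] dfactor_other_block ddfactor_other_block by simp
qed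

lemma fundamental_tensor_has_partial_deriv:
  assumes "blk c = j" "p \<in> tangent_chart j"
  shows "has_partial_deriv (Inr d) (fundamental_tensor a c) p (fin_pd (Inr d) (fundamental_tensor a c) p)"
proof -
  have j: "j \<le> b" using assms(1) blk_bounded by auto
  obtain D where D: "has_partial_deriv (Inr d) (ddfactor j a c) p D"
    using ex_has_partial_deriv_ddfactor[OF j assms(2)] by blast
  have "has_partial_deriv (Inr d) (\<lambda>q. weight j (fst q) * (dfactor j a q * dfactor j c q + factor j q * ddfactor j a c q)) p
      (0 * (dfactor j a p * dfactor j c p + factor j p * ddfactor j a c p) + weight j (fst p)
        * ((ddfactor j d a p * dfactor j c p + dfactor j a p * ddfactor j d c p) + (dfactor j d p * ddfactor j a c p + factor j p * D)))"
    by (intro has_partial_deriv_mult has_partial_deriv_add has_partial_deriv_Inr_fst has_partial_deriv_factor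
        has_partial_deriv_dfactor D j assms)
  then have "has_partial_deriv (Inr d) (fundamental_tensor a c) p
      (0 * (dfactor j a p * dfactor j c p + factor j p * ddfactor j a c p) + weight j (fst p)
        * ((ddfactor j d a p * dfactor j c p + dfactor j a p * ddfactor j d c p) + (dfactor j d p * ddfactor j a c p + factor j p * D)))"
    by (rule has_partial_deriv_transfer[OF open_tangent_chart[OF j] assms(2), rotated])
      (simp add: fundamental_tensor_in_block[OF assms(1)])
  then show ?thesis using fin_pd_eqI by metis
qed

lemma euler_factor:
  "j \<le> b \<Longrightarrow> q \<in> tangent_chart j \<Longrightarrow> (\<Sum>c\<in>UNIV. snd q $ c * dfactor j c q) = factor j q"
  using euler_fibre_homogeneous[OF factor_smooth factor_homogeneous, of j "fst q" "snd q"]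
  by (simp add: dfactor_def)

lemma euler_ddfactor_left:
  assumes "j \<le> b" "q \<in> tangent_chart j"
  shows "(\<Sum>a\<in>UNIV. snd q $ a * ddfactor j a c q) = 0"
proof -
  have "fibre_homogeneous (tangent_chart j) (fin_ipd [Inr c] (factor j)) (1 - 1)"
    using fibre_homogeneous_partial[OF factor_smooth fibre_cone_tangent_chart factor_homogeneous] assms(1)
    by simp
  from euler_fibre_homogeneous[OF factor_smooth[OF assms(1)] this, of "fst q" "snd q"] assms(2)
  show ?thesis by (simp add: ddfactor_def)
qed

text \<open>Obtained by differentiating \<open>euler_factor\<close>, so that no symmetry of second derivatives is needed.\<close>

lemma euler_ddfactor_right:
  assumes "j \<le> b" "q \<in> tangent_chart j"
  shows "(\<Sum>c\<in>UNIV. snd q $ c * ddfactor j a c q) = 0"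
proof -
  define H where "H q = (\<Sum>c\<in>UNIV. snd q $ c * dfactor j c q)" for q
  have "has_partial_deriv (Inr a) H q (\<Sum>c\<in>UNIV. of_bool (c = a) * dfactor j c q + snd q $ c * ddfactor j a c q)"
    unfolding H_def
    by (intro has_partial_deriv_sum has_partial_deriv_mult has_partial_deriv_Inr_component
        has_partial_deriv_dfactor assms) auto
  moreover have "has_partial_deriv (Inr a) H q (dfactor j a q)"
    by (rule has_partial_deriv_transfer[OF open_tangent_chart[OF assms(1)] assms(2) _ has_partial_deriv_factor[OF assms]])
      (simp add: H_def euler_factor assms(1))
  ultimately have "(\<Sum>c\<in>UNIV. of_bool (c = a) * dfactor j c q + snd q $ c * ddfactor j a c q) = dfactor j a q"
    by (rule has_partial_deriv_unique)
  then show ?thesis by (simp add: sum.distrib)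
qed

lemma fundamental_tensor_contract_y:
  assumes "blk a = j" "p \<in> tangent_chart j"
  shows "(\<Sum>c\<in>UNIV. fundamental_tensor a c p * snd p $ c) = weight j (fst p) * dfactor j a p * factor j p"
proof -
  have j: "j \<le> b" using assms(1) blk_bounded by auto
  have "(\<Sum>c\<in>UNIV. fundamental_tensor a c p * snd p $ c) = (\<Sum>c\<in>UNIV.
      weight j (fst p) * dfactor j a p * (snd p $ c * dfactor j c p) + weight j (fst p) * factor j p * (snd p $ c * ddfactor j a c p))"
    by (intro sum.cong refl) (simp add: fundamental_tensor_block_formula[OF disjI1[OF assms(1)] assms(2)] algebra_simps)
  also have "\<dots> = weight j (fst p) * dfactor j a p * factor j p"
    by (simp add: sum.distrib sum_distrib_left[symmetric] euler_factor[OF j assms(2)] euler_ddfactor_right[OF j assms(2)])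
  finally show ?thesis .
qed

lemma fin_pd_fundamental_tensor_contract_y:
  assumes "blk c = j" "p \<in> tangent_chart j"
  shows "(\<Sum>a\<in>UNIV. snd p $ a * fin_pd (Inr d) (fundamental_tensor a c) p) = 0"
proof -
  have j: "j \<le> b" using assms(1) blk_bounded by auto
  define G where "G q = (\<Sum>a\<in>UNIV. snd q $ a * fundamental_tensor a c q)" for q
  have G: "G q = weight j (fst q) * (dfactor j c q * factor j q)" if "q \<in> tangent_chart j" for q
  proof -
    have "G q = (\<Sum>a\<in>UNIV. weight j (fst q) * dfactor j c q * (snd q $ a * dfactor j a q)
        + weight j (fst q) * factor j q * (snd q $ a * ddfactor j a c q))"
      unfolding G_def by (intro sum.cong refl) (simp add: fundamental_tensor_in_block[OF assms(1) that] algebra_simps)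
    also have "\<dots> = weight j (fst q) * (dfactor j c q * factor j q)"
      by (simp add: sum.distrib sum_distrib_left[symmetric] euler_factor[OF j that] euler_ddfactor_left[OF j that])
    finally show ?thesis .
  qed
  have "has_partial_deriv (Inr d) (\<lambda>q. weight j (fst q) * (dfactor j c q * factor j q)) p
      (0 * (dfactor j c p * factor j p) + weight j (fst p) * (ddfactor j d c p * factor j p + dfactor j c p * dfactor j d p))"
    by (intro has_partial_deriv_mult has_partial_deriv_Inr_fst has_partial_deriv_factor has_partial_deriv_dfactor j assms)
  from has_partial_deriv_transfer[OF open_tangent_chart[OF j] assms(2) G this]
  have "has_partial_deriv (Inr d) G p (fundamental_tensor d c p)"
    by (rule has_partial_deriv_eq_rhs) (simp_all add: fundamental_tensor_in_block[OF assms] algebra_simps)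
  moreover have "has_partial_deriv (Inr d) G p
      (\<Sum>a\<in>UNIV. of_bool (a = d) * fundamental_tensor a c p + snd p $ a * fin_pd (Inr d) (fundamental_tensor a c) p)"
    unfolding G_def
    by (rule has_partial_deriv_sum[OF finite_class.finite_UNIV])
      (rule has_partial_deriv_mult[OF has_partial_deriv_Inr_component fundamental_tensor_has_partial_deriv[OF assms]])
  ultimately have "fundamental_tensor d c p = (\<Sum>a\<in>UNIV. of_bool (a = d) * fundamental_tensor a c p + snd p $ a * fin_pd (Inr d) (fundamental_tensor a c) p)"
    by (rule has_partial_deriv_unique)
  then show ?thesis by (simp add: sum.distrib)
qed

lemma product_domain_tangent_chart: "(x, y) \<in> product_domain blk b U \<Longrightarrow> j \<le> b \<Longrightarrow> (x, y) \<in> tangent_chart j"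
  unfolding product_domain_def tangent_chart_def by auto

lemma weight_pos:
  assumes "(x, y) \<in> product_domain blk b U" "j \<le> b"
  shows "weight j x > 0"
proof (cases "j = 0")
  case False
  then have "\<forall>x \<in> U 0 \<inter> U j. f j x > 0"
    using twists assms(2) unfolding twist_function_def by auto
  moreover have "x \<in> U 0 \<inter> U j" using assms unfolding product_domain_def by auto
  ultimately have "f j x > 0" by blast
  then show ?thesis using False by (simp add: weight_def)
qed (simp add: weight_def)

lemma fin_C_contract_y_block:
  assumes "(x, y) \<in> product_domain blk b U" "j \<le> b"
  shows "(\<Sum>a | blk a = j. y $ a * fin_C F x y a c d) = 0"
proof (cases "blk c = j")
  case True
  have "(\<Sum>a | blk a = j. y $ a * fin_C F x y a c d) = (\<Sum>a\<in>UNIV. y $ a * fin_C F x y a c d)"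
    by (rule sum.mono_neutral_left) (use True fin_C_off_block in auto)
  also have "\<dots> = 1/2 * (\<Sum>a\<in>UNIV. snd (x, y) $ a * fin_pd (Inr d) (fundamental_tensor a c) (x, y))"
    by (simp add: fin_C_eq_fundamental_tensor sum_distrib_left algebra_simps)
  also have "\<dots> = 0"
    using fin_pd_fundamental_tensor_contract_y[OF True product_domain_tangent_chart[OF assms]] by simp
  finally show ?thesis .
qed (auto simp: fin_C_off_block)

lemma fin_I_contract_y_block:
  assumes "(x, y) \<in> product_domain blk b U" "j \<le> b"
  shows "(\<Sum>a | blk a = j. y $ a * fin_I F x y a) = 0"
proof -
  let ?G = "matrix_inv (fin_gmat F x y)"
  have "(\<Sum>a | blk a = j. y $ a * fin_I F x y a)
      = (\<Sum>a | blk a = j. \<Sum>c\<in>UNIV. \<Sum>d\<in>UNIV. ?G $ c $ d * (y $ a * fin_C F x y a c d))"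
    unfolding fin_I_def by (simp add: sum_distrib_left algebra_simps)
  also have "\<dots> = (\<Sum>c\<in>UNIV. \<Sum>d\<in>UNIV. ?G $ c $ d * (\<Sum>a | blk a = j. y $ a * fin_C F x y a c d))"
    by (simp add: sum.swap[of _ "{a. blk a = j}"] sum.swap[of _ "{a. blk a = j}" UNIV] sum_distrib_left)
  also have "\<dots> = 0" by (simp add: fin_C_contract_y_block[OF assms])
  finally show ?thesis .
qed

lemma fin_g_contract_y_block:
  assumes "(x, y) \<in> product_domain blk b U" "blk a = j"
  shows "(\<Sum>c | blk c = j. fin_g F x y a c * y $ c) = (\<Sum>c\<in>UNIV. fin_g F x y a c * y $ c)"
  by (rule sum.mono_neutral_left) (use assms fundamental_tensor_off_block in \<open>auto simp: fundamental_tensor_def\<close>)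

lemma fin_g_contract_yy_block:
  assumes "(x, y) \<in> product_domain blk b U" "j \<le> b"
  shows "(\<Sum>a | blk a = j. y $ a * (\<Sum>c\<in>UNIV. fin_g F x y a c * y $ c)) = weight j x * (factor j (x, y))\<^sup>2"
proof -
  have "(\<Sum>a | blk a = j. y $ a * (\<Sum>c\<in>UNIV. fin_g F x y a c * y $ c))
      = weight j x * factor j (x, y) * (\<Sum>a | blk a = j. y $ a * dfactor j a (x, y))"
    using fundamental_tensor_contract_y[OF _ product_domain_tangent_chart[OF assms]]
    by (simp add: sum_distrib_left fundamental_tensor_def algebra_simps)
  also have "(\<Sum>a | blk a = j. y $ a * dfactor j a (x, y)) = (\<Sum>a\<in>UNIV. y $ a * dfactor j a (x, y))"
    by (rule sum.mono_neutral_left) (use dfactor_other_block[OF assms(2)] in auto)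
  also have "\<dots> = factor j (x, y)"
    using euler_factor[OF assms(2) product_domain_tangent_chart[OF assms]] by simp
  finally show ?thesis by (simp add: power2_eq_square)
qed

lemma fin_h_block_form:
  assumes "(x, y) \<in> product_domain blk b U" "j \<le> b"
  defines "q \<equiv> weight j x * (factor j (x, y))\<^sup>2"
  shows "(\<Sum>c | blk c = j. \<Sum>e | blk e = j. y $ c * y $ e * fin_h F x y c e) = q - q\<^sup>2 / (F x y)\<^sup>2"
proof -
  define G where "G a = (\<Sum>c\<in>UNIV. fin_g F x y a c * y $ c)" for a
  have yG: "(\<Sum>a | blk a = j. y $ a * G a) = q"
    unfolding G_def q_def by (rule fin_g_contract_yy_block[OF assms(1,2)])
  have "(\<Sum>c | blk c = j. \<Sum>e | blk e = j. y $ c * y $ e * fin_h F x y c e)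
      = (\<Sum>c | blk c = j. y $ c * (\<Sum>e | blk e = j. fin_g F x y c e * y $ e)
          - 1 / (F x y)\<^sup>2 * (y $ c * G c) * (\<Sum>e | blk e = j. y $ e * G e))"
  proof (intro sum.cong refl)
    fix c
    have "y $ c * y $ e * fin_h F x y c e
        = y $ c * (fin_g F x y c e * y $ e) - 1 / (F x y)\<^sup>2 * (y $ c * G c) * (y $ e * G e)" for e
      unfolding fin_h_def G_def by (simp add: algebra_simps)
    then show "(\<Sum>e | blk e = j. y $ c * y $ e * fin_h F x y c e)
        = y $ c * (\<Sum>e | blk e = j. fin_g F x y c e * y $ e)
          - 1 / (F x y)\<^sup>2 * (y $ c * G c) * (\<Sum>e | blk e = j. y $ e * G e)"
      by (simp only: sum_subtractf sum_distrib_left)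
  qed
  also have "\<dots> = (\<Sum>c | blk c = j. y $ c * G c - q / (F x y)\<^sup>2 * (y $ c * G c))"
    by (intro sum.cong refl) (simp only: yG, simp add: fin_g_contract_y_block[OF assms(1)] G_def)
  also have "\<dots> = q - q\<^sup>2 / (F x y)\<^sup>2"
    by (simp only: sum_subtractf sum_distrib_left[symmetric] yG) (simp add: power2_eq_square)
  finally show ?thesis .
qed

lemma fin_h_block_form_nonzero:
  assumes "(x, y) \<in> product_domain blk b U" "j \<le> b" "i \<le> b" "i \<noteq> j"
  shows "(\<Sum>c | blk c = j. \<Sum>e | blk e = j. y $ c * y $ e * fin_h F x y c e) \<noteq> 0"
proof -
  have pos: "weight k x * (factor k (x, y))\<^sup>2 > 0" if "k \<le> b" for k
    using weight_pos[OF assms(1) that] factor_pos[OF that product_domain_tangent_chart[OF assms(1) that]] by simp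
  define q where "q = weight j x * (factor j (x, y))\<^sup>2"
  have "q < (\<Sum>k\<in>{i, j}. weight k x * (factor k (x, y))\<^sup>2)"
    using assms(4) pos[OF assms(3)] by (simp add: q_def)
  also have "\<dots> \<le> (\<Sum>k\<le>b. weight k x * (factor k (x, y))\<^sup>2)"
    by (rule sum_mono2) (use assms pos in \<open>auto intro: less_imp_le\<close>)
  also have "\<dots> = (F x y)\<^sup>2"
    unfolding F_squared by (simp add: summand_def power2_eq_square)
  finally have "q < (F x y)\<^sup>2" .
  moreover have "q > 0" using pos[OF assms(2)] by (simp add: q_def)
  ultimately have "q\<^sup>2 / (F x y)\<^sup>2 < q" by (simp add: pos_divide_less_eq power2_eq_square)
  then show ?thesis unfolding fin_h_block_form[OF assms(1,2)] q_def by linarith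
qed

lemma fin_I_zero:
  assumes "C_reducible_on (product_domain blk b U) F" "(x, y) \<in> product_domain blk b U"
  shows "fin_I F x y a = 0"
proof -
  define j where "j = (if blk a = 0 then 1 else (0::nat))"
  have j: "j \<le> b" "j \<noteq> blk a" using two_factors by (auto simp: j_def)
  have "fin_I F x y a * fin_h F x y c e + fin_I F x y c * fin_h F x y a e + fin_I F x y e * fin_h F x y a c = 0"
    if "c \<in> {c. blk c = j}" for c e
  proof -
    have "fin_M F x y a c e = 0" using assms unfolding C_reducible_on_def by auto
    moreover have "fin_C F x y a c e = 0" using that j by (intro fin_C_off_block) auto
    ultimately show ?thesis unfolding fin_M_def by (simp add: add_pos_nonneg)
  qed
  with contract_trace_part[of "\<lambda>c. y $ c" "fin_I F x y" "{c. blk c = j}" a "fin_h F x y"]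
  have "fin_I F x y a * (\<Sum>c | blk c = j. \<Sum>e | blk e = j. y $ c * y $ e * fin_h F x y c e) = 0"
    using fin_I_contract_y_block[OF assms(2) j(1)] by blast
  with fin_h_block_form_nonzero[OF assms(2) j(1) blk_bounded j(2)[symmetric]] show ?thesis by simp
qed

end

theorem theorem5p12:
  fixes blk :: "'n::finite \<Rightarrow> nat" and b :: nat
    and U :: "nat \<Rightarrow> (real^'n) set"
    and Fs :: "nat \<Rightarrow> real^'n \<Rightarrow> real^'n \<Rightarrow> real"
    and f :: "nat \<Rightarrow> real^'n \<Rightarrow> real"
  assumes "b \<ge> 1"
    and "\<forall>k. blk k \<le> b"
    and "\<forall>i\<le>b. finsler_factor {k. blk k = i} (U i) (Fs i)"
    and "\<forall>i\<in>{1..b}. twist_function {k. blk k = 0} {k. blk k = i} (U 0) (U i) (f i)"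
    and "C_reducible_on (product_domain blk b U) (twisted_F b Fs f)"
  shows "riemannian_on (product_domain blk b U) (twisted_F b Fs f)"
proof -
  interpret twisted_product blk b U Fs f
    using assms(1-4) by unfold_locales
  show ?thesis
    unfolding riemannian_on_def
  proof (clarify)
    fix x y i j k assume dom: "(x, y) \<in> product_domain blk b U"
    then have "fin_M F x y i j k = 0" using assms(5) unfolding C_reducible_on_def by auto
    then show "fin_C F x y i j k = 0" unfolding fin_M_def using fin_I_zero[OF assms(5) dom] by simp
  qed
qed

end
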